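(* Let $V$ be a vertex operator algebra and let $h\in V$ satisfy $L(n)h=\delta_{n,0}h$ and $h_nh=\delta_{n,1}\gamma\mathbf 1$ for all integers $n\ge0$, with $\gamma\in\mathbb Q$. Then, as operators on $V$ (formal power series in $z$), $$e^{z(L(1)-h(1))}e^{-zL(1)}=\exp\Big(\sum_{k=1}^{\infty}\frac{h(k)}{k}(-z)^{k}\Big),\qquad e^{z(L(-1)+h(-1))}e^{-zL(-1)}=\exp\Big(\sum_{k=1}^{\infty}\frac{h(-k)}{k}z^{k}\Big).$$
   Context: $Y(h,z)=\sum_{n\in\mathbb Z}h(n)z^{-n-1}$ and $Y(\omega,z)=\sum_{n\in\mathbb Z}L(n)z^{-n-2}$, where $\omega$ is the Virasoro element of $V$. *)

theory Defs
  imports Complex_Main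
begin

text \<open>The vertex operator is encoded by its modes: Y a n b = a_n b, i.e. Y(a,z) = sum_n a_n z^(-n-1).\<close>

type_synonym 'v vfield = "'v \<Rightarrow> int \<Rightarrow> 'v \<Rightarrow> 'v"

text \<open>Sum of a finitely supported family (finiteness is guaranteed by truncation).\<close>
definition fsum :: "(nat \<Rightarrow> 'v::comm_monoid_add) \<Rightarrow> 'v" where
  "fsum f = sum f {j. f j \<noteq> 0}"

text \<open>Virasoro operators: Y(omega,z) = sum_n L(n) z^(-n-2), so L(n) = omega_(n+1).\<close>
definition Vir :: "'v vfield \<Rightarrow> 'v \<Rightarrow> int \<Rightarrow> 'v \<Rightarrow> 'v" where
  "Vir Y \<omega> n = Y \<omega> (n + 1)"

definition weight_space :: "(complex \<Rightarrow> 'v \<Rightarrow> 'v) \<Rightarrow> 'v vfield \<Rightarrow> 'v \<Rightarrow> int \<Rightarrow> 'v set" where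
  "weight_space scale Y \<omega> n = {v. Vir Y \<omega> 0 v = scale (of_int n) v}"

definition is_VOA :: "(complex \<Rightarrow> 'v::ab_group_add \<Rightarrow> 'v) \<Rightarrow> 'v vfield \<Rightarrow> 'v \<Rightarrow> 'v \<Rightarrow> bool" where
  "is_VOA scale Y vac \<omega> \<longleftrightarrow>
     vector_space scale \<and>
     (\<forall>a n. Vector_Spaces.linear scale scale (Y a n)) \<and>
     (\<forall>n b. Vector_Spaces.linear scale scale (\<lambda>a. Y a n b)) \<and>
     \<comment> \<open>truncation\<close>
     (\<forall>a b. \<exists>N. \<forall>n\<ge>N. Y a n b = 0) \<and>
     \<comment> \<open>vacuum property Y(1,z) = id\<close>
     (\<forall>n v. Y vac n v = (if n = -1 then v else 0)) \<and>
     \<comment> \<open>creation property\<close>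
     (\<forall>a. (\<forall>n\<ge>0. Y a n vac = 0) \<and> Y a (-1) vac = a) \<and>
     \<comment> \<open>Jacobi identity, in Borcherds' component form\<close>
     (\<forall>a b c m n k.
        fsum (\<lambda>j. scale (of_int m gchoose j) (Y (Y a (n + int j) b) (m + k - int j) c)) =
        fsum (\<lambda>j. scale ((-1) ^ j * (of_int n gchoose j))
                 (Y a (m + n - int j) (Y b (k + int j) c)
                  - scale ((-1) powi n) (Y b (n + k - int j) (Y a (m + int j) c))))) \<and>
     \<comment> \<open>Virasoro relations with some central charge\<close>
     (\<exists>cc. \<forall>m n v. Vir Y \<omega> m (Vir Y \<omega> n v) - Vir Y \<omega> n (Vir Y \<omega> m v) =
          scale (of_int (m - n)) (Vir Y \<omega> (m + n) v)
          + (if m + n = 0 then scale ((of_int m ^ 3 - of_int m) / 12 * cc) v else 0)) \<and>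
     \<comment> \<open>L(-1)-derivative property Y(L(-1)a,z) = d/dz Y(a,z)\<close>
     (\<forall>a n v. Y (Vir Y \<omega> (-1) a) n v = scale (- of_int n) (Y a (n - 1) v)) \<and>
     \<comment> \<open>grading: V is the (direct) sum of the L(0)-eigenspaces V_(n), n in Z\<close>
     (UNIV \<subseteq> module.span scale (\<Union>n. weight_space scale Y \<omega> n)) \<and>
     (\<forall>n. \<exists>B. finite B \<and> weight_space scale Y \<omega> n \<subseteq> module.span scale B) \<and>
     (\<exists>N. \<forall>n<N. weight_space scale Y \<omega> n = {0})"

text \<open>Formal power series in z (nonnegative powers) with coefficients operators on V.\<close>
definition ser_mult :: "(nat \<Rightarrow> 'v \<Rightarrow> 'v::comm_monoid_add) \<Rightarrow> (nat \<Rightarrow> 'v \<Rightarrow> 'v) \<Rightarrow> nat \<Rightarrow> 'v \<Rightarrow> 'v" where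
  "ser_mult A B n v = (\<Sum>i\<le>n. A i (B (n - i) v))"

definition ser_one :: "nat \<Rightarrow> 'v \<Rightarrow> 'v::zero" where
  "ser_one n v = (if n = 0 then v else 0)"

definition ser_pow :: "(nat \<Rightarrow> 'v \<Rightarrow> 'v::comm_monoid_add) \<Rightarrow> nat \<Rightarrow> nat \<Rightarrow> 'v \<Rightarrow> 'v" where
  "ser_pow A m = (ser_mult A ^^ m) ser_one"

text \<open>exp(S) = sum_m S^m/m! for a series S with zero constant term.\<close>
definition ser_exp :: "(complex \<Rightarrow> 'v \<Rightarrow> 'v) \<Rightarrow> (nat \<Rightarrow> 'v \<Rightarrow> 'v::comm_monoid_add) \<Rightarrow> nat \<Rightarrow> 'v \<Rightarrow> 'v" where
  "ser_exp scale S n v = (\<Sum>m\<le>n. scale (1 / fact m) (ser_pow S m n v))"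

definition exp_op :: "(complex \<Rightarrow> 'v \<Rightarrow> 'v) \<Rightarrow> ('v \<Rightarrow> 'v) \<Rightarrow> nat \<Rightarrow> 'v \<Rightarrow> 'v" where
  "exp_op scale X n v = scale (1 / fact n) ((X ^^ n) v)"

end

(*
  With B = L(e) and K = -e h(e) for e = 1 or e = -1, both sides G(z) of each identity solve
  G' = (B + K) G - G B with G(0) = 1; comparing coefficients shows that this equation has only
  one solution. For e^{z(B+K)} e^{-zB} this is immediate. For exp S(z) one uses the covariant
  derivative D X = X' - [B, X], which is a derivation: since h is primary of weight one,
  [L(m), h(k)] = -k h(m+k), which makes D S = K constant; and K commutes with all coefficients
  of S because h(m) and h(k) commute unless m + k = 0. Hence D (exp S) = K exp S.
*)

theory Submission
  imports Defs
begin

definition ser_ad :: "('v \<Rightarrow> 'v::ab_group_add) \<Rightarrow> (nat \<Rightarrow> 'v \<Rightarrow> 'v) \<Rightarrow> nat \<Rightarrow> 'v \<Rightarrow> 'v" where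
  "ser_ad B X n v = B (X n v) - X n (B v)"

locale complex_vector_space = vector_space sc
  for sc :: "complex \<Rightarrow> 'v::ab_group_add \<Rightarrow> 'v"
begin

sublocale vector_space_pair sc sc ..

abbreviation lin :: "('v \<Rightarrow> 'v) \<Rightarrow> bool" where
  "lin \<equiv> Vector_Spaces.linear sc sc"

lemma lin_compose: "lin f \<Longrightarrow> lin g \<Longrightarrow> lin (\<lambda>v. f (g v))"
  using Vector_Spaces.linear_compose[of sc sc g sc f] by (simp add: o_def)

lemma lin_funpow: "lin f \<Longrightarrow> lin (f ^^ n)"
  by (induction n) (simp_all add: linear_id Vector_Spaces.linear_compose)

lemma lin_ser_mult:
  assumes "\<And>i. lin (X i)" and "\<And>i. lin (Z i)"
  shows "lin (ser_mult X Z n)"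
  unfolding ser_mult_def[abs_def] by (intro linear_compose_sum ballI lin_compose[OF assms])

lemma lin_ser_one: "lin (ser_one n)"
  unfolding ser_one_def[abs_def] by (cases "n = 0") (simp_all add: linear_zero linear_ident)

lemma lin_ser_pow: "(\<And>i. lin (S i)) \<Longrightarrow> lin (ser_pow S m n)"
  by (induction m arbitrary: n) (simp_all add: ser_pow_def lin_ser_one lin_ser_mult)

lemma lin_ser_exp: "(\<And>i. lin (S i)) \<Longrightarrow> lin (ser_exp sc S n)"
  unfolding ser_exp_def[abs_def]
  by (intro linear_compose_sum ballI linear_compose_scale_right lin_ser_pow)

lemma lin_exp_op: "lin A \<Longrightarrow> lin (exp_op sc A n)"
  unfolding exp_op_def[abs_def] by (intro linear_compose_scale_right lin_funpow)

definition ser_deriv :: "(nat \<Rightarrow> 'v \<Rightarrow> 'v) \<Rightarrow> nat \<Rightarrow> 'v \<Rightarrow> 'v" where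
  "ser_deriv X n v = sc (of_nat (Suc n)) (X (Suc n) v)"

text \<open>The derivative of the conjugate e^{-zB} X(z) e^{zB}, conjugated back by e^{zB}.\<close>
definition ser_cov_deriv :: "('v \<Rightarrow> 'v) \<Rightarrow> (nat \<Rightarrow> 'v \<Rightarrow> 'v) \<Rightarrow> nat \<Rightarrow> 'v \<Rightarrow> 'v" where
  "ser_cov_deriv B X n v = ser_deriv X n v - ser_ad B X n v"

lemma ser_deriv_ser_mult:
  assumes X: "\<And>i. lin (X i)"
  shows "ser_deriv (ser_mult X Z) n v = ser_mult (ser_deriv X) Z n v + ser_mult X (ser_deriv Z) n v"
proof -
  let ?t = "\<lambda>i. X i (Z (Suc n - i) v)"
  have left: "ser_mult (ser_deriv X) Z n v = (\<Sum>i\<le>Suc n. sc (of_nat i) (?t i))"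
    unfolding ser_mult_def ser_deriv_def by (simp only: sum.atMost_Suc_shift) simp
  have right: "ser_mult X (ser_deriv Z) n v = (\<Sum>i\<le>Suc n. sc (of_nat (Suc n - i)) (?t i))"
    unfolding ser_mult_def ser_deriv_def sum.atMost_Suc
    by (simp add: linear_scale[OF X] Suc_diff_le del: of_nat_Suc)
  have "ser_deriv (ser_mult X Z) n v
      = (\<Sum>i\<le>Suc n. sc (of_nat i) (?t i) + sc (of_nat (Suc n - i)) (?t i))"
    unfolding ser_deriv_def ser_mult_def scale_sum_right
  proof (rule sum.cong)
    fix i assume "i \<in> {..Suc n}"
    then have "of_nat (Suc n) = (of_nat i + of_nat (Suc n - i) :: complex)"
      by (simp flip: of_nat_add del: of_nat_Suc)
    then show "sc (of_nat (Suc n)) (?t i) = sc (of_nat i) (?t i) + sc (of_nat (Suc n - i)) (?t i)"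
      by (simp only: scale_left_distrib)
  qed simp
  then show ?thesis
    unfolding left right sum.distrib .
qed

lemma ser_ad_ser_mult:
  assumes B: "lin B" and X: "\<And>i. lin (X i)"
  shows "ser_ad B (ser_mult X Z) n v = ser_mult (ser_ad B X) Z n v + ser_mult X (ser_ad B Z) n v"
  by (simp add: ser_ad_def ser_mult_def linear_sum[OF B] linear_diff[OF X] flip: sum.distrib sum_subtractf)

lemma ser_cov_deriv_ser_mult:
  assumes B: "lin B" and X: "\<And>i. lin (X i)"
  shows "ser_cov_deriv B (ser_mult X Z) n v
    = ser_mult (ser_cov_deriv B X) Z n v + ser_mult X (ser_cov_deriv B Z) n v"
  unfolding ser_cov_deriv_def ser_deriv_ser_mult[OF X] ser_ad_ser_mult[OF B X]
  by (simp add: ser_mult_def linear_diff[OF X] sum_subtractf)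

lemma ser_pow_Suc: "ser_pow S (Suc m) = ser_mult S (ser_pow S m)"
  by (simp add: ser_pow_def)

lemma ser_pow_eq_0:
  assumes S: "\<And>i. lin (S i)" and S0: "\<And>v. S 0 v = 0" and "n < m"
  shows "ser_pow S m n v = 0"
  using \<open>n < m\<close>
proof (induction m arbitrary: n v)
  case (Suc m)
  have "S i (ser_pow S m (n - i) v) = 0" if "i \<le> n" for i
  proof (cases "i = 0")
    case False
    with Suc.prems that have "n - i < m" by auto
    then show ?thesis by (simp add: Suc.IH linear_0[OF S])
  qed (simp add: S0)
  then show ?case by (simp add: ser_pow_Suc ser_mult_def)
qed simp

lemma ser_exp_eq_sum:
  assumes S: "\<And>i. lin (S i)" and S0: "\<And>v. S 0 v = 0" and "n \<le> N"
  shows "ser_exp sc S n v = (\<Sum>m\<le>N. sc (1 / fact m) (ser_pow S m n v))"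
  unfolding ser_exp_def
  by (rule sum.mono_neutral_left) (use assms ser_pow_eq_0[where S = S, OF S S0] in auto)

lemma ser_cov_deriv_ser_pow:
  assumes B: "lin B" and K: "lin K" and S: "\<And>i. lin (S i)"
    and dS: "\<And>n v. ser_cov_deriv B S n v = (if n = 0 then K v else 0)"
    and comm: "\<And>i v. K (S i v) = S i (K v)"
  shows "ser_cov_deriv B (ser_pow S m) n v = sc (of_nat m) (K (ser_pow S (m - 1) n v))"
proof (induction m arbitrary: n v)
  case 0
  then show ?case
    by (simp add: ser_pow_def ser_one_def ser_cov_deriv_def ser_deriv_def ser_ad_def linear_0[OF B])
next
  case (Suc m)
  note IH = Suc.IH
  have "ser_mult S (ser_cov_deriv B (ser_pow S m)) n v = sc (of_nat m) (K (ser_pow S m n v))"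
  proof (cases m)
    case 0
    then show ?thesis using IH by (simp add: ser_mult_def linear_0[OF S])
  next
    case (Suc k)
    have IH': "ser_cov_deriv B (ser_pow S m) j w = sc (of_nat m) (K (ser_pow S k j w))" for j w
      using IH Suc by simp
    have "ser_mult S (ser_cov_deriv B (ser_pow S m)) n v
        = (\<Sum>i\<le>n. sc (of_nat m) (K (S i (ser_pow S k (n - i) v))))"
      by (simp add: ser_mult_def IH' linear_scale[OF S] comm)
    also have "\<dots> = sc (of_nat m) (K (ser_pow S m n v))"
      by (simp add: Suc ser_pow_Suc ser_mult_def scale_sum_right linear_sum[OF K])
    finally show ?thesis .
  qed
  moreover have "ser_mult (ser_cov_deriv B S) (ser_pow S m) n v = K (ser_pow S m n v)"
    by (simp add: ser_mult_def dS)
  ultimately show ?case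
    by (simp add: ser_pow_Suc ser_cov_deriv_ser_mult[OF B S] scale_left_distrib)
qed

lemma ser_cov_deriv_ser_exp:
  assumes B: "lin B" and K: "lin K" and S: "\<And>i. lin (S i)" and S0: "\<And>v. S 0 v = 0"
    and dS: "\<And>n v. ser_cov_deriv B S n v = (if n = 0 then K v else 0)"
    and comm: "\<And>i v. K (S i v) = S i (K v)"
  shows "ser_cov_deriv B (ser_exp sc S) n v = K (ser_exp sc S n v)"
proof -
  have trunc: "ser_exp sc S k w = (\<Sum>m\<le>Suc n. sc (1 / fact m) (ser_pow S m k w))"
    if "k \<le> Suc n" for k w
    using ser_exp_eq_sum[where S = S, OF S S0 that] .
  have "ser_cov_deriv B (ser_exp sc S) n v
      = (\<Sum>m\<le>Suc n. sc (1 / fact m) (ser_cov_deriv B (ser_pow S m) n v))"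
    unfolding ser_cov_deriv_def ser_deriv_def ser_ad_def
    by (simp add: trunc linear_sum[OF B] linear_scale[OF B] scale_sum_right sum_subtractf
        scale_right_diff_distrib del: sum.atMost_Suc)
  also have "\<dots> = (\<Sum>m\<le>Suc n. sc (1 / fact m) (sc (of_nat m) (K (ser_pow S (m - 1) n v))))"
    by (simp add: ser_cov_deriv_ser_pow[where S = S, OF B K S dS comm])
  also have "\<dots> = (\<Sum>m\<le>n. sc (1 / fact m) (K (ser_pow S m n v)))"
    by (simp only: sum.atMost_Suc_shift) (simp del: of_nat_Suc)
  also have "\<dots> = K (ser_exp sc S n v)"
    by (simp add: ser_exp_def linear_sum[OF K] linear_scale[OF K])
  finally show ?thesis .
qed

lemma ser_deriv_exp_op:
  assumes A: "lin A"
  shows "ser_deriv (exp_op sc A) n v = A (exp_op sc A n v)"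
    and "ser_deriv (exp_op sc A) n v = exp_op sc A n (A v)"
proof -
  have coeff: "of_nat (Suc n) * (1 / fact (Suc n)) = (1 / fact n :: complex)"
    by (simp del: of_nat_Suc)
  show "ser_deriv (exp_op sc A) n v = A (exp_op sc A n v)"
    by (simp add: ser_deriv_def exp_op_def coeff linear_scale[OF A] del: of_nat_Suc)
  show "ser_deriv (exp_op sc A) n v = exp_op sc A n (A v)"
    by (simp add: ser_deriv_def exp_op_def coeff funpow_Suc_right del: of_nat_Suc funpow.simps)
qed

lemma ser_deriv_exp_op_mult:
  assumes A: "lin A" and C: "lin C"
  shows "ser_deriv (ser_mult (exp_op sc A) (exp_op sc C)) n v
    = A (ser_mult (exp_op sc A) (exp_op sc C) n v) + ser_mult (exp_op sc A) (exp_op sc C) n (C v)"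
  by (simp add: ser_deriv_ser_mult lin_exp_op[OF A] ser_deriv_exp_op(1)[OF A]
      ser_deriv_exp_op(2)[OF C] ser_mult_def linear_sum[OF A])

lemma ser_coeff_Suc_eq_deriv: "X (Suc n) v = sc (1 / of_nat (Suc n)) (ser_deriv X n v)"
  by (simp add: ser_deriv_def del: of_nat_Suc)

lemma ser_ode_unique:
  assumes X: "\<And>n v. ser_deriv X n v = A (X n v) + X n (C v)"
    and Z: "\<And>n v. ser_deriv Z n v = A (Z n v) + Z n (C v)"
    and "X 0 = Z 0"
  shows "X = Z"
proof
  fix n
  show "X n = Z n"
  proof (induction n)
    case (Suc n)
    show ?case
      by (rule ext) (simp only: ser_coeff_Suc_eq_deriv[of X] ser_coeff_Suc_eq_deriv[of Z] X Z Suc.IH)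
  qed (fact \<open>X 0 = Z 0\<close>)
qed

theorem exp_op_mult_exp_op_eq_ser_exp:
  assumes B: "lin B" and K: "lin K" and S: "\<And>i. lin (S i)" and S0: "\<And>v. S 0 v = 0"
    and dS: "\<And>n v. ser_cov_deriv B S n v = (if n = 0 then K v else 0)"
    and comm: "\<And>i v. K (S i v) = S i (K v)"
  shows "ser_mult (exp_op sc (\<lambda>v. B v + K v)) (exp_op sc (\<lambda>v. - B v)) = ser_exp sc S"
proof (rule ser_ode_unique[where A = "\<lambda>v. B v + K v" and C = "\<lambda>v. - B v"])
  let ?G = "ser_mult (exp_op sc (\<lambda>v. B v + K v)) (exp_op sc (\<lambda>v. - B v))"
  show "ser_deriv ?G n v = B (?G n v) + K (?G n v) + ?G n (- B v)" for n v
    by (simp add: ser_deriv_exp_op_mult linear_compose_add[OF B K] linear_compose_neg[OF B])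
  show "ser_deriv (ser_exp sc S) n v
    = B (ser_exp sc S n v) + K (ser_exp sc S n v) + ser_exp sc S n (- B v)" for n v
    using ser_cov_deriv_ser_exp[where S = S, OF B K S S0 dS comm, of n v]
    by (simp add: ser_cov_deriv_def ser_ad_def linear_neg[OF lin_ser_exp[OF S]] algebra_simps)
  show "?G 0 = ser_exp sc S 0"
    by (simp add: fun_eq_iff ser_mult_def exp_op_def ser_exp_def ser_pow_def ser_one_def)
qed

end

lemma fsum_eq_sum:
  assumes "finite F" and "\<And>j. j \<notin> F \<Longrightarrow> f j = 0"
  shows "fsum f = sum f F"
  unfolding fsum_def by (rule sum.mono_neutral_left) (use assms in auto)

locale vertex_operator_algebra =
  fixes scale :: "complex \<Rightarrow> 'v::ab_group_add \<Rightarrow> 'v" and Y :: "'v vfield" and vac \<omega> :: 'v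
  assumes VOA: "is_VOA scale Y vac \<omega>"
begin

sublocale complex_vector_space scale
  using VOA by (simp add: is_VOA_def complex_vector_space_def)

lemma lin_mode: "lin (Y a n)"
  using VOA by (simp add: is_VOA_def)

lemma lin_Vir: "lin (Vir Y \<omega> n)"
  by (simp add: Vir_def lin_mode)

lemma mode_linear_left: "Vector_Spaces.linear scale scale (\<lambda>a. Y a n b)"
  using VOA by (simp add: is_VOA_def)

lemma mode_zero_left: "Y 0 n b = 0"
  using linear_0[OF mode_linear_left] by simp

lemma mode_scale_left: "Y (scale c a) n b = scale c (Y a n b)"
  using linear_scale[OF mode_linear_left] by simp

lemma vacuum_mode: "Y vac n v = (if n = -1 then v else 0)"
  using VOA by (simp add: is_VOA_def)

lemma L_minus_one_mode: "Y (Vir Y \<omega> (-1) a) n v = scale (- of_int n) (Y a (n - 1) v)"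
  using VOA by (simp add: is_VOA_def)

lemma Borcherds_identity:
  "fsum (\<lambda>j. scale (of_int m gchoose j) (Y (Y a (n + int j) b) (m + k - int j) c)) =
   fsum (\<lambda>j. scale ((-1) ^ j * (of_int n gchoose j))
     (Y a (m + n - int j) (Y b (k + int j) c)
      - scale ((-1) powi n) (Y b (n + k - int j) (Y a (m + int j) c))))"
  using VOA unfolding is_VOA_def by (elim conjE) simp

lemma mode_commutator:
  "Y a m (Y b k c) - Y b k (Y a m c)
    = fsum (\<lambda>j. scale (of_int m gchoose j) (Y (Y a (int j) b) (m + k - int j) c))"
  using Borcherds_identity[of m a 0 b k c]
  by (subst (asm) (2) fsum_eq_sum[where F = "{0}"]) (auto simp: gbinomial_0_left)

lemma Vir_mode_commutator:
  assumes primary: "\<forall>n::int. n \<ge> 0 \<longrightarrow> Vir Y \<omega> n h = (if n = 0 then h else 0)"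
  shows "Vir Y \<omega> m (Y h k c) - Y h k (Vir Y \<omega> m c) = scale (- of_int k) (Y h (m + k) c)"
proof -
  have \<omega>_mode: "Y \<omega> j = Vir Y \<omega> (j - 1)" for j
    by (simp add: Vir_def)
  have "Vir Y \<omega> m (Y h k c) - Y h k (Vir Y \<omega> m c)
      = (\<Sum>j\<in>{0, 1}. scale (of_int (m + 1) gchoose j) (Y (Y \<omega> (int j) h) (m + 1 + k - int j) c))"
    unfolding Vir_def mode_commutator
  proof (rule fsum_eq_sum)
    fix j :: nat
    assume "j \<notin> {0, 1}"
    then show "scale (of_int (m + 1) gchoose j) (Y (Y \<omega> (int j) h) (m + 1 + k - int j) c) = 0"
      using primary by (simp add: \<omega>_mode mode_zero_left)
  qed simp
  also have "\<dots> = scale (- (of_int m + 1 + of_int k)) (Y h (m + k) c) + scale (of_int m + 1) (Y h (m + k) c)"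
    using primary by (simp add: \<omega>_mode L_minus_one_mode algebra_simps)
  also have "\<dots> = scale (- of_int k) (Y h (m + k) c)"
    by (simp flip: scale_left_distrib)
  finally show ?thesis .
qed

lemma Heisenberg_commutator:
  assumes Heisenberg: "\<forall>n::int. n \<ge> 0 \<longrightarrow> Y h n h = (if n = 1 then scale \<gamma> vac else 0)"
  shows "Y h m (Y h k c) - Y h k (Y h m c) = (if m + k = 0 then scale (of_int m * \<gamma>) c else 0)"
proof -
  have "Y h m (Y h k c) - Y h k (Y h m c)
      = (\<Sum>j\<in>{1}. scale (of_int m gchoose j) (Y (Y h (int j) h) (m + k - int j) c))"
    unfolding mode_commutator
    by (rule fsum_eq_sum) (use Heisenberg in \<open>auto simp: mode_zero_left\<close>)
  then show ?thesis
    using Heisenberg by (simp add: mode_scale_left vacuum_mode)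
qed

context
  fixes h :: 'v and \<gamma> :: complex
  assumes primary: "\<forall>n::int. n \<ge> 0 \<longrightarrow> Vir Y \<omega> n h = (if n = 0 then h else 0)"
    and Heisenberg: "\<forall>n::int. n \<ge> 0 \<longrightarrow> Y h n h = (if n = 1 then scale \<gamma> vac else 0)"
begin

lemma exp_shifted_Vir_mult_eq_ser_exp:
  assumes \<epsilon>: "\<epsilon> = 1 \<or> \<epsilon> = -1"
  shows "ser_mult (exp_op scale (\<lambda>v. Vir Y \<omega> \<epsilon> v - scale (of_int \<epsilon>) (Y h \<epsilon> v)))
      (exp_op scale (\<lambda>v. - Vir Y \<omega> \<epsilon> v))
    = ser_exp scale (\<lambda>k v. if k = 0 then 0
        else scale ((- of_int \<epsilon>) ^ k / of_nat k) (Y h (\<epsilon> * int k) v))"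
    (is "_ = ser_exp scale ?S")
proof -
  define K where "K v = - scale (of_int \<epsilon>) (Y h \<epsilon> v)" for v
  have lin_K: "lin K"
    unfolding K_def[abs_def] by (intro linear_compose_neg linear_compose_scale_right lin_mode)
  have lin_S: "lin (?S i)" for i
    by (cases "i = 0") (simp_all add: linear_zero linear_compose_scale_right lin_mode)
  have comm: "K (?S i v) = ?S i (K v)" for i v
  proof -
    have "\<epsilon> + \<epsilon> * int i \<noteq> 0"
      using \<epsilon> by auto
    then have "Y h \<epsilon> (Y h (\<epsilon> * int i) v) = Y h (\<epsilon> * int i) (Y h \<epsilon> v)"
      using Heisenberg_commutator[OF Heisenberg, of \<epsilon> "\<epsilon> * int i" v] by simp
    then show ?thesis
      by (simp add: K_def linear_0[OF lin_mode] linear_scale[OF lin_mode] linear_neg[OF lin_mode]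
          scale_left_commute)
  qed
  have dS: "ser_cov_deriv (Vir Y \<omega> \<epsilon>) ?S n v = (if n = 0 then K v else 0)" for n v
  proof (cases "n = 0")
    case True
    then show ?thesis
      by (simp add: K_def ser_cov_deriv_def ser_deriv_def ser_ad_def linear_0[OF lin_Vir])
  next
    case False
    have coeff: "(- of_int \<epsilon>) ^ n / of_nat n * - of_int (\<epsilon> * int n) = ((- of_int \<epsilon>) ^ Suc n :: complex)"
      using False by (simp add: field_simps)
    have "ser_ad (Vir Y \<omega> \<epsilon>) ?S n v
        = scale ((- of_int \<epsilon>) ^ n / of_nat n) (scale (- of_int (\<epsilon> * int n)) (Y h (\<epsilon> + \<epsilon> * int n) v))"
      using False by (simp add: ser_ad_def linear_scale[OF lin_Vir] Vir_mode_commutator[OF primary]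
          flip: scale_right_diff_distrib)
    also have "\<dots> = scale ((- of_int \<epsilon>) ^ Suc n) (Y h (\<epsilon> * int (Suc n)) v)"
      by (simp only: scale_scale coeff) (simp add: algebra_simps)
    also have "\<dots> = ser_deriv ?S n v"
      by (simp add: ser_deriv_def del: of_nat_Suc)
    finally show ?thesis
      using False by (simp add: ser_cov_deriv_def)
  qed
  have "(\<lambda>v. Vir Y \<omega> \<epsilon> v - scale (of_int \<epsilon>) (Y h \<epsilon> v)) = (\<lambda>v. Vir Y \<omega> \<epsilon> v + K v)"
    by (simp add: K_def)
  then show ?thesis
    using exp_op_mult_exp_op_eq_ser_exp[where S = ?S, OF lin_Vir lin_K lin_S _ dS comm] by simp
qed

end

end

theorem lemma3p3:
  fixes scale :: "complex \<Rightarrow> 'v::ab_group_add \<Rightarrow> 'v"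
    and Y :: "'v vfield" and vac \<omega> h :: 'v and \<gamma> :: rat
  assumes "is_VOA scale Y vac \<omega>"
    and "\<forall>n::int. n \<ge> 0 \<longrightarrow> Vir Y \<omega> n h = (if n = 0 then h else 0)"
    and "\<forall>n::int. n \<ge> 0 \<longrightarrow> Y h n h = (if n = 1 then scale (of_rat \<gamma>) vac else 0)"
  shows "ser_mult (exp_op scale (\<lambda>v. Vir Y \<omega> 1 v - Y h 1 v)) (exp_op scale (\<lambda>v. - Vir Y \<omega> 1 v))
           = ser_exp scale (\<lambda>k v. if k = 0 then 0
                else scale ((-1) ^ k / of_nat k) (Y h (int k) v))
       \<and> ser_mult (exp_op scale (\<lambda>v. Vir Y \<omega> (-1) v + Y h (-1) v)) (exp_op scale (\<lambda>v. - Vir Y \<omega> (-1) v))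
           = ser_exp scale (\<lambda>k v. if k = 0 then 0
                else scale (1 / of_nat k) (Y h (- int k) v))"
proof -
  interpret vertex_operator_algebra scale Y vac \<omega>
    by (rule vertex_operator_algebra.intro) (fact assms(1))
  note shifted = exp_shifted_Vir_mult_eq_ser_exp[OF assms(2,3)]
  show ?thesis
    using shifted[of 1] shifted[of "-1"] by (simp cong: if_cong)
qed

end
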